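(* Let $G$ consist of two parallel paths $P_1,P_2$ from $s$ to $d$ (of arbitrary lengths), let the inputs be constant, $f_s(t)=\bar f>0$ and $b_d(t)=\bar b>0$ for all $t$, and let $g\in\mathcal F$ be non-linear, i.e. $g(x)\neq x$ for some $x\in[0,1/2]$. Then there exist leakage parameters $(l_v)_v$ with $l_{P_1}<l_{P_2}$ (so $P_1$ is the unique minimum-leakage path), depending on $g$, $\bar f$ and $\bar b$, and an initial configuration (positive pheromone levels on all edges and nonnegative initial flows), such that under the dynamics governed by $g$, $\nu^f_{ss_1}(t)$ does not converge to $1$ as $t\to\infty$.
   Context: Model. Directed graph $G=(V,E)$ with source $s$, destination $d$; discrete time $t=0,1,\dots$; pheromone levels $p_{uv}(t)\ge0$ on edges, forward flows $f_v(t)\ge0$ and backward flows $b_v(t)\ge0$ at vertices; leakage parameters $l_v\in[0,1]$ and decay parameter $\delta\in(0,1)$. $f_s(t)$ and $b_d(t)$ are exogenous inputs. Flow update: for $v\ne s$, $f_v(t+1)=(1-l_v)\sum_{z:(z,v)\in E}f_{zv}(t)$; for $u\ne d$, $b_u(t+1)=(1-l_u)\sum_{z:(u,z)\in E}b_{uz}(t)$; pheromone update $p_{uv}(t+1)=\delta(p_{uv}(t)+f_{uv}(t)+b_{uv}(t))$. Normalized pheromone levels $\nu^f_{uv}(t)=p_{uv}(t)/\sum_{z:(u,z)\in E}p_{uz}(t)$, $\nu^b_{uv}(t)=p_{uv}(t)/\sum_{z:(z,v)\in E}p_{zv}(t)$. Path leakage $l_P=1-\prod_{v\in P\setminus\{s,d\}}(1-l_v)$.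 Two parallel paths: $G$ is the union of two directed paths $P_1,P_2$ from $s$ to $d$ sharing only $s$ and $d$; $s_1,s_2$ are the successors of $s$ and $d_1,d_2$ the predecessors of $d$ on $P_1,P_2$. Family $\mathcal F$: continuous, monotonically non-decreasing functions $g:[0,1/2]\to[0,1]$ with $g(0)=0$ and $g(1/2)=1/2$. The dynamics governed by $g$: at every vertex of out-degree (resp. in-degree) one, the entire forward (resp. backward) flow goes along the unique edge; at $s$, with $x=\min(\nu^f_{ss_1}(t),\nu^f_{ss_2}(t))$, the edge attaining the minimum receives forward flow $g(x)f_s(t)$ and the other edge receives $(1-g(x))f_s(t)$ (if $x=1/2$ each receives $f_s(t)/2$); at $d$ the backward flow $b_d(t)$ is split between $(d_1,d)$ and $(d_2,d)$ in the same way using $\nu^b_{d_1d}(t),\nu^b_{d_2d}(t)$. The linear decision rule corresponds to $g(x)=x$. *)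

theory Defs
  imports "HOL-Analysis.Analysis"
begin

text \<open>
Path i (i = 1, 2) has n i internal vertices, indexed (i,k), k = 1..n i.
Its edges are indexed (i,k), k = 0..n i: edge (i,k) goes from vertex k to vertex k+1 of the path,
where vertex 0 is s and vertex (n i + 1) is d. So edge (i,0) = (s,s_i) and edge (i, n i) = (d_i,d).
A state is a triple (p, f, b): pheromone p i k on edge (i,k), forward flow f i k and backward
flow b i k at internal vertex (i,k). The other path is 3 - i.
\<close>

definition family_F :: "(real \<Rightarrow> real) set" where
  "family_F = {g. continuous_on {0..1/2} g \<and> mono_on {0..1/2} g \<and> g ` {0..1/2} \<subseteq> {0..1}
                  \<and> g 0 = 0 \<and> g (1/2) = 1/2}"

text \<open>Fraction of the flow sent along the edge with pheromone a, when the competing edge has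
pheromone b (normalized levels x = a/(a+b), y = b/(a+b)).\<close>
definition split_share :: "(real \<Rightarrow> real) \<Rightarrow> real \<Rightarrow> real \<Rightarrow> real" where
  "split_share g a b =
     (let x = a / (a + b); y = b / (a + b)
      in if x < y then g x else if y < x then 1 - g y else 1/2)"

definition fwd_edge :: "(real \<Rightarrow> real) \<Rightarrow> real \<Rightarrow> (nat \<Rightarrow> nat \<Rightarrow> real) \<Rightarrow> (nat \<Rightarrow> nat \<Rightarrow> real)
    \<Rightarrow> nat \<Rightarrow> nat \<Rightarrow> real" where
  "fwd_edge g fbar p f i k =
     (if k = 0 then split_share g (p i 0) (p (3 - i) 0) * fbar else f i k)"

definition bwd_edge :: "(real \<Rightarrow> real) \<Rightarrow> real \<Rightarrow> (nat \<Rightarrow> nat) \<Rightarrow> (nat \<Rightarrow> nat \<Rightarrow> real)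
    \<Rightarrow> (nat \<Rightarrow> nat \<Rightarrow> real) \<Rightarrow> nat \<Rightarrow> nat \<Rightarrow> real" where
  "bwd_edge g bbar n p b i k =
     (if k = n i then split_share g (p i (n i)) (p (3 - i) (n (3 - i))) * bbar else b i (Suc k))"

type_synonym state = "(nat \<Rightarrow> nat \<Rightarrow> real) \<times> (nat \<Rightarrow> nat \<Rightarrow> real) \<times> (nat \<Rightarrow> nat \<Rightarrow> real)"

definition step :: "(real \<Rightarrow> real) \<Rightarrow> real \<Rightarrow> real \<Rightarrow> real \<Rightarrow> (nat \<Rightarrow> nat) \<Rightarrow> (nat \<Rightarrow> nat \<Rightarrow> real)
    \<Rightarrow> state \<Rightarrow> state" where
  "step g \<delta> fbar bbar n l st =
     (case st of (p, f, b) \<Rightarrow>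
       ((\<lambda>i k. \<delta> * (p i k + fwd_edge g fbar p f i k + bwd_edge g bbar n p b i k)),
        (\<lambda>i k. (1 - l i k) * fwd_edge g fbar p f i (k - 1)),
        (\<lambda>i k. (1 - l i k) * bwd_edge g bbar n p b i k)))"

primrec traj :: "(real \<Rightarrow> real) \<Rightarrow> real \<Rightarrow> real \<Rightarrow> real \<Rightarrow> (nat \<Rightarrow> nat) \<Rightarrow> (nat \<Rightarrow> nat \<Rightarrow> real)
    \<Rightarrow> state \<Rightarrow> nat \<Rightarrow> state" where
  "traj g \<delta> fbar bbar n l st0 0 = st0"
| "traj g \<delta> fbar bbar n l st0 (Suc t) = step g \<delta> fbar bbar n l (traj g \<delta> fbar bbar n l st0 t)"

definition nu_f_ss1 :: "state \<Rightarrow> real" where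
  "nu_f_ss1 st = (case st of (p, f, b) \<Rightarrow> p 1 0 / (p 1 0 + p 2 0))"

definition path_leak :: "(nat \<Rightarrow> nat \<Rightarrow> real) \<Rightarrow> (nat \<Rightarrow> nat) \<Rightarrow> nat \<Rightarrow> real" where
  "path_leak l n i = 1 - (\<Prod>k\<in>{1..n i}. 1 - l i k)"

end

(* Non-convergence is witnessed by a stationary state. Put all leakage of path i at its first
   vertex, which passes on a fraction rho i of the flow, with rho 2 < rho 1. If forward flows F i
   leaving s and backward flows B i leaving d are reproduced by the decision rule applied to the
   pheromone they deposit, then the state carrying these flows, with pheromone delta/(1-delta)
   times the traffic of each edge, is a fixed point of the dynamics, and nu^f_{ss_1} stays at
   (F 1 + B 1 rho 1) / (F 1 + B 1 rho 1 + F 2 + B 2 rho 2) < 1.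
   Such flows exist because g is not the identity. If g x < x somewhere, a point x with a small
   gap x - g x makes path 1 the minority at s while the backward flow splits evenly at d. If
   g x > x somewhere, path 2 is the minority at both s and d and leaks nothing. In both cases the
   required points come from the intermediate value theorem. *)

theory Submission
  imports Defs
begin

lemma split_share_scale:
  assumes "c > 0"
  shows "split_share g (c * P) (c * Q) = split_share g P Q"
proof -
  have "c * P / (c * P + c * Q) = P / (P + Q)" "c * Q / (c * P + c * Q) = Q / (P + Q)"
    using assms by (simp_all add: distrib_left[symmetric])
  then show ?thesis by (simp add: split_share_def Let_def)
qed

lemma split_share_same: "split_share g P P = 1/2"
  by (simp add: split_share_def Let_def)

lemma split_share_minority:
  fixes P Q x :: real
  assumes "P > 0" "Q > 0" "P / (P + Q) = x" "x < 1/2"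
  shows "split_share g P Q = g x" and "split_share g Q P = 1 - g x"
proof -
  have "Q / (P + Q) = 1 - x"
    using assms(1-3) by (simp add: field_simps)
  then show "split_share g P Q = g x" "split_share g Q P = 1 - g x"
    using assms(3,4) by (simp_all add: split_share_def Let_def add.commute)
qed

lemma fraction_of_sum_eq_iff:
  fixes P Q x :: real
  assumes "P + Q \<noteq> 0"
  shows "P / (P + Q) = x \<longleftrightarrow> P * (1 - x) = x * Q"
  using assms by (auto simp: field_simps)

text \<open>\<open>F i\<close> and \<open>B i\<close> are the forward and backward flows entering path \<open>i\<close> at \<open>s\<close> and at \<open>d\<close>;
  the first internal vertex of path \<open>i\<close> passes on the fraction \<open>\<rho> i\<close> of what it receives and the
  others leak nothing. The equations say that the decision rule, applied to the pheromone these
  flows deposit next to \<open>s\<close> and \<open>d\<close>, reproduces the flows.\<close>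

definition stationary_flows ::
    "(real \<Rightarrow> real) \<Rightarrow> real \<Rightarrow> real \<Rightarrow> (nat \<Rightarrow> real) \<Rightarrow> (nat \<Rightarrow> real) \<Rightarrow> (nat \<Rightarrow> real) \<Rightarrow> bool" where
  "stationary_flows g fbar bbar F B \<rho> \<longleftrightarrow>
     (\<forall>i\<in>{1,2}. 0 \<le> F i \<and> 0 \<le> B i \<and> 0 \<le> \<rho> i \<and> \<rho> i \<le> 1
       \<and> 0 < F i + B i * \<rho> i \<and> 0 < F i * \<rho> i + B i
       \<and> split_share g (F i + B i * \<rho> i) (F (3 - i) + B (3 - i) * \<rho> (3 - i)) * fbar = F i
       \<and> split_share g (F i * \<rho> i + B i) (F (3 - i) * \<rho> (3 - i) + B (3 - i)) * bbar = B i)"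

definition first_vertex_leak :: "(nat \<Rightarrow> real) \<Rightarrow> nat \<Rightarrow> nat \<Rightarrow> real" where
  "first_vertex_leak \<rho> i k = (if k = 1 then 1 - \<rho> i else 0)"

text \<open>For \<open>c = \<delta> / (1 - \<delta>)\<close>, \<open>c\<close> times the traffic of an edge is the fixed point of
  \<open>p \<mapsto> \<delta> * (p + traffic)\<close>.\<close>

definition stationary_state :: "real \<Rightarrow> (nat \<Rightarrow> real) \<Rightarrow> (nat \<Rightarrow> real) \<Rightarrow> (nat \<Rightarrow> real) \<Rightarrow> state" where
  "stationary_state c F B \<rho> =
     ((\<lambda>i k. c * (F i * (if k = 0 then 1 else \<rho> i) + B i * (if k = 0 then \<rho> i else 1))),
      (\<lambda>i k. F i * \<rho> i),
      (\<lambda>i k. B i * (if k = 1 then \<rho> i else 1)))"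

text \<open>The step function also updates entries that belong to no edge or vertex of the graph;
  states are only compared on the two paths.\<close>

definition agree_on_paths :: "(nat \<Rightarrow> nat) \<Rightarrow> state \<Rightarrow> state \<Rightarrow> bool" where
  "agree_on_paths n = (\<lambda>(p, f, b) (p', f', b'). \<forall>i\<in>{1,2}.
     (\<forall>k \<le> n i. p i k = p' i k) \<and> (\<forall>k\<in>{1..n i}. f i k = f' i k \<and> b i k = b' i k))"

lemma agree_on_paths_refl: "agree_on_paths n st st"
  by (cases st) (simp add: agree_on_paths_def)

lemma agree_on_paths_stationary_stateD:
  assumes "agree_on_paths n (p, f, b) (stationary_state c F B \<rho>)" "i \<in> {1,2}"
  shows "k \<le> n i \<Longrightarrow> p i k = c * (F i * (if k = 0 then 1 else \<rho> i) + B i * (if k = 0 then \<rho> i else 1))"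
    and "k \<in> {1..n i} \<Longrightarrow> f i k = F i * \<rho> i"
    and "k \<in> {1..n i} \<Longrightarrow> b i k = B i * (if k = 1 then \<rho> i else 1)"
  using assms unfolding agree_on_paths_def stationary_state_def by auto

lemma path_leak_first_vertex_leak:
  assumes "n i \<ge> 1"
  shows "path_leak (first_vertex_leak \<rho>) n i = 1 - \<rho> i"
proof -
  have "(\<Prod>k\<in>{1..n i}. 1 - first_vertex_leak \<rho> i k) = (\<Prod>k\<in>{1..n i}. if k = 1 then \<rho> i else 1)"
    by (rule prod.cong) (auto simp: first_vertex_leak_def)
  also have "\<dots> = \<rho> i"
    using assms by (subst prod.delta) auto
  finally show ?thesis
    by (simp add: path_leak_def)
qed

lemma fwd_edge_stationary:
  assumes "c > 0" "stationary_flows g fbar bbar F B \<rho>"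
    and agree: "agree_on_paths n (p, f, b) (stationary_state c F B \<rho>)"
    and "i \<in> {1,2}" "k \<le> n i"
  shows "fwd_edge g fbar p f i k = F i * (if k = 0 then 1 else \<rho> i)"
proof (cases "k = 0")
  case True
  have "3 - i \<in> {1,2}"
    using assms(4) by auto
  then have "split_share g (p i 0) (p (3 - i) 0)
      = split_share g (F i + B i * \<rho> i) (F (3 - i) + B (3 - i) * \<rho> (3 - i))"
    using agree_on_paths_stationary_stateD(1)[OF agree, of _ 0] assms(4)
    by (simp add: split_share_scale[OF \<open>c > 0\<close>])
  then show ?thesis
    using True assms(2,4) by (auto simp: fwd_edge_def stationary_flows_def)
qed (use agree_on_paths_stationary_stateD(2)[OF agree] assms(4,5) in \<open>simp add: fwd_edge_def\<close>)

lemma bwd_edge_stationary: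
  assumes "c > 0" "stationary_flows g fbar bbar F B \<rho>" "n 1 \<ge> 1" "n 2 \<ge> 1"
    and agree: "agree_on_paths n (p, f, b) (stationary_state c F B \<rho>)"
    and "i \<in> {1,2}" "k \<le> n i"
  shows "bwd_edge g bbar n p b i k = B i * (if k = 0 then \<rho> i else 1)"
proof (cases "k = n i")
  case True
  have "3 - i \<in> {1,2}" "n i \<noteq> 0" "n (3 - i) \<noteq> 0"
    using assms(3,4,6) by auto
  then have "split_share g (p i (n i)) (p (3 - i) (n (3 - i)))
      = split_share g (F i * \<rho> i + B i) (F (3 - i) * \<rho> (3 - i) + B (3 - i))"
    using agree_on_paths_stationary_stateD(1)[OF agree] assms(6)
    by (simp add: split_share_scale[OF \<open>c > 0\<close>] add.commute)
  then show ?thesis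
    using True \<open>n i \<noteq> 0\<close> assms(2,6) by (auto simp: bwd_edge_def stationary_flows_def)
qed (use agree_on_paths_stationary_stateD(3)[OF agree] assms(6,7) in \<open>simp add: bwd_edge_def\<close>)

lemma step_stationary_state:
  assumes "n 1 \<ge> 1" "n 2 \<ge> 1" "0 < \<delta>" "\<delta> < 1"
    and flows: "stationary_flows g fbar bbar F B \<rho>"
    and agree: "agree_on_paths n st (stationary_state (\<delta> / (1 - \<delta>)) F B \<rho>)"
  shows "agree_on_paths n (step g \<delta> fbar bbar n (first_vertex_leak \<rho>) st)
    (stationary_state (\<delta> / (1 - \<delta>)) F B \<rho>)"
proof -
  define c where "c = \<delta> / (1 - \<delta>)"
  have "c > 0"
    using assms(3,4) by (simp add: c_def)
  have fixed: "\<delta> * (c * X + X) = c * X" for X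
    using assms(3,4) by (simp add: c_def field_simps)
  obtain p f b where st: "st = (p, f, b)"
    by (cases st)
  note stationary = agree_on_paths_stationary_stateD[OF agree[unfolded st, folded c_def]]
    and fwd = fwd_edge_stationary[OF \<open>c > 0\<close> flows agree[unfolded st, folded c_def]]
    and bwd = bwd_edge_stationary[OF \<open>c > 0\<close> flows assms(1,2) agree[unfolded st, folded c_def]]
  show ?thesis
    unfolding st step_def c_def[symmetric] prod.case
  proof (simp only: agree_on_paths_def stationary_state_def prod.case, intro ballI conjI allI impI)
    fix i k :: nat assume i: "i \<in> {1,2}"
    show "\<delta> * (p i k + fwd_edge g fbar p f i k + bwd_edge g bbar n p b i k)
        = c * (F i * (if k = 0 then 1 else \<rho> i) + B i * (if k = 0 then \<rho> i else 1))" if "k \<le> n i"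
      using stationary(1)[OF i that] fwd[OF i that] bwd[OF i that] fixed by (simp add: add.assoc)
    assume "k \<in> {1..n i}"
    then show "(1 - first_vertex_leak \<rho> i k) * fwd_edge g fbar p f i (k - 1) = F i * \<rho> i"
      and "(1 - first_vertex_leak \<rho> i k) * bwd_edge g bbar n p b i k = B i * (if k = 1 then \<rho> i else 1)"
      using fwd[OF i, of "k - 1"] bwd[OF i, of k] by (auto simp: first_vertex_leak_def)
  qed
qed


lemma traj_invariant:
  assumes "P st0" and "\<And>st. P st \<Longrightarrow> P (step g \<delta> fbar bbar n l st)"
  shows "P (traj g \<delta> fbar bbar n l st0 t)"
  using assms by (induction t) auto

lemma agree_on_paths_traj_stationary_state:
  assumes "n 1 \<ge> 1" "n 2 \<ge> 1" "0 < \<delta>" "\<delta> < 1" "stationary_flows g fbar bbar F B \<rho>"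
  shows "agree_on_paths n (traj g \<delta> fbar bbar n (first_vertex_leak \<rho>) (stationary_state (\<delta> / (1 - \<delta>)) F B \<rho>) t)
    (stationary_state (\<delta> / (1 - \<delta>)) F B \<rho>)"
  by (rule traj_invariant[where P = "\<lambda>st. agree_on_paths n st (stationary_state (\<delta> / (1 - \<delta>)) F B \<rho>)"])
    (simp_all add: agree_on_paths_refl step_stationary_state[OF assms])

lemma nu_f_ss1_stationary:
  assumes "c > 0" "agree_on_paths n st (stationary_state c F B \<rho>)"
  shows "nu_f_ss1 st = (F 1 + B 1 * \<rho> 1) / ((F 1 + B 1 * \<rho> 1) + (F 2 + B 2 * \<rho> 2))"
proof -
  obtain p f b where st: "st = (p, f, b)"
    by (cases st)
  have "p i 0 = c * (F i + B i * \<rho> i)" if "i \<in> {1,2}" for i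
    using agree_on_paths_stationary_stateD(1)[OF assms(2)[unfolded st] that, of 0] by simp
  then show ?thesis
    using assms(1) by (simp add: st nu_f_ss1_def distrib_left[symmetric])
qed

lemma nonconvergent_from_stationary_flows:
  fixes n :: "nat \<Rightarrow> nat"
  assumes "n 1 \<ge> 1" "n 2 \<ge> 1" "0 < \<delta>" "\<delta> < 1"
    and flows: "stationary_flows g fbar bbar F B \<rho>" and "\<rho> 2 < \<rho> 1"
  shows "\<exists>l :: nat \<Rightarrow> nat \<Rightarrow> real.
           (\<forall>i\<in>{1,2}. \<forall>k\<in>{1..n i}. 0 \<le> l i k \<and> l i k \<le> 1)
         \<and> path_leak l n 1 < path_leak l n 2
         \<and> (\<exists>p0 f0 b0.
              (\<forall>i\<in>{1,2}. \<forall>k\<in>{0..n i}. 0 < p0 i k)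
            \<and> (\<forall>i\<in>{1,2}. \<forall>k\<in>{1..n i}. 0 \<le> f0 i k \<and> 0 \<le> b0 i k)
            \<and> \<not> ((\<lambda>t. nu_f_ss1 (traj g \<delta> fbar bbar n l (p0, f0, b0) t)) \<longlonglongrightarrow> 1))"
proof -
  obtain p0 f0 b0 where st0: "stationary_state (\<delta> / (1 - \<delta>)) F B \<rho> = (p0, f0, b0)"
    by (cases "stationary_state (\<delta> / (1 - \<delta>)) F B \<rho>")
  have "\<forall>i\<in>{1,2}. \<forall>k\<in>{1..n i}. 0 \<le> first_vertex_leak \<rho> i k \<and> first_vertex_leak \<rho> i k \<le> 1"
    using flows by (auto simp: stationary_flows_def first_vertex_leak_def)
  moreover have "path_leak (first_vertex_leak \<rho>) n 1 < path_leak (first_vertex_leak \<rho>) n 2"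
    using assms(1,2,6) by (simp add: path_leak_first_vertex_leak)
  moreover have "\<forall>i\<in>{1,2}. \<forall>k\<in>{0..n i}. 0 < p0 i k"
    and "\<forall>i\<in>{1,2}. \<forall>k\<in>{1..n i}. 0 \<le> f0 i k \<and> 0 \<le> b0 i k"
    using flows st0 assms(3,4) by (auto simp: stationary_flows_def stationary_state_def)
  moreover have "\<not> ((\<lambda>t. nu_f_ss1 (traj g \<delta> fbar bbar n (first_vertex_leak \<rho>) (p0, f0, b0) t)) \<longlonglongrightarrow> 1)"
  proof
    let ?P = "F 1 + B 1 * \<rho> 1" and ?Q = "F 2 + B 2 * \<rho> 2"
    assume "(\<lambda>t. nu_f_ss1 (traj g \<delta> fbar bbar n (first_vertex_leak \<rho>) (p0, f0, b0) t)) \<longlonglongrightarrow> 1"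
    then have "?P / (?P + ?Q) = 1"
      using nu_f_ss1_stationary[OF _ agree_on_paths_traj_stationary_state[OF assms(1-5)]] assms(3,4)
      by (simp add: st0 LIMSEQ_const_iff)
    moreover have "?P > 0" "?Q > 0"
      using flows by (auto simp: stationary_flows_def)
    ultimately show False
      by simp
  qed
  ultimately show ?thesis
    by blast
qed

lemma stationary_flows_from_gap:
  fixes g :: "real \<Rightarrow> real"
  assumes "fbar > 0" "bbar > 0" "0 \<le> g x" "g x < x" "x < 1/2"
    and small_gap: "2 * fbar * (x - g x) \<le> bbar * (1 - 2 * x)"
  shows "\<exists>F B \<rho>. stationary_flows g fbar bbar F B \<rho> \<and> \<rho> 2 < \<rho> 1"
proof -
  define a where "a = g x"
  (* L2 balances the pheromone at d; L1 then makes x the pheromone fraction of path 1 at s. *)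
  define L1 where "L1 = 2 * fbar * (1 - a) * (x - a) / (bbar * (1 - x - a))"
  define L2 where "L2 = a * L1 / (1 - a)"
  define P where "P = a * fbar + bbar / 2 * L1"
  define Q where "Q = (1 - a) * fbar + bbar / 2 * L2"
  have a: "0 \<le> a" "a < x" "a < 1/2"
    using assms(3-5) by (simp_all add: a_def)
  have L1: "0 < L1" "L1 \<le> 1"
  proof -
    have "2 * fbar * (1 - a) * (x - a) \<le> 2 * fbar * (x - a)"
      using a \<open>fbar > 0\<close> by (simp add: mult_left_le_one_le)
    also have "\<dots> \<le> bbar * (1 - 2 * x)"
      using small_gap by (simp add: a_def)
    also have "\<dots> \<le> bbar * (1 - x - a)"
      using a \<open>bbar > 0\<close> by (intro mult_left_mono) auto
    finally show "L1 \<le> 1" "0 < L1"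
      using a assms(1,2,5) by (simp_all add: L1_def)
  qed
  have L2: "0 \<le> L2" "L2 < L1"
    using a L1 by (simp_all add: L2_def field_simps)
  have PQ: "P > 0" "Q > 0"
    using a L1 L2 assms(1,2) by (simp_all add: P_def Q_def add_nonneg_pos add_pos_nonneg)
  have "P / (P + Q) = x"
  proof -
    have "1 - x - a \<noteq> 0" "1 - a \<noteq> 0" "bbar \<noteq> 0"
      using a assms(2,5) by auto
    then have "bbar * L1 * (1 - x - a) = 2 * fbar * (1 - a) * (x - a)" "L2 * (1 - a) = a * L1"
      by (simp_all add: L1_def L2_def)
    then have "(1 - a) * (P * (1 - x) - x * Q) = 0"
      unfolding P_def Q_def by algebra
    then show ?thesis
      using \<open>1 - a \<noteq> 0\<close> PQ by (simp add: fraction_of_sum_eq_iff)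
  qed
  then have forward: "split_share g P Q * fbar = a * fbar" "split_share g Q P * fbar = (1 - a) * fbar"
    using split_share_minority[OF PQ _ \<open>x < 1/2\<close>] by (simp_all add: a_def)
  have equal_at_d: "a * fbar * L1 + bbar / 2 = (1 - a) * fbar * L2 + bbar / 2"
    using a by (simp add: L2_def)
  have positive_at_d: "0 < a * fbar * L1 + bbar / 2" "0 < (1 - a) * fbar * L2 + bbar / 2"
    using a L1 L2 assms(1,2) by (auto intro!: add_nonneg_pos)
  have backward:
      "split_share g (a * fbar * L1 + bbar / 2) ((1 - a) * fbar * L2 + bbar / 2) * bbar = bbar / 2"
      "split_share g ((1 - a) * fbar * L2 + bbar / 2) (a * fbar * L1 + bbar / 2) * bbar = bbar / 2"
    unfolding equal_at_d split_share_same by simp_all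
  have "stationary_flows g fbar bbar (\<lambda>i. if i = 1 then a * fbar else (1 - a) * fbar) (\<lambda>_. bbar / 2)
      (\<lambda>i. if i = 1 then L1 else L2)"
    using forward backward PQ positive_at_d a L1 L2 assms(1,2)
    by (auto simp: stationary_flows_def P_def Q_def mult.commute[of "bbar / 2"] add_pos_nonneg)
  then show ?thesis
    using L2 by fastforce
qed

lemma stationary_flows_below_diagonal:
  assumes "g \<in> family_F" "fbar > 0" "bbar > 0" "0 \<le> x0" "x0 \<le> 1/2" "g x0 < x0"
  shows "\<exists>F B \<rho>. stationary_flows g fbar bbar F B \<rho> \<and> \<rho> 2 < \<rho> 1"
proof -
  have cont: "continuous_on {0..x0} g" and mono: "mono_on {0..x0} g" and "g 0 = 0" "g (1/2) = 1/2"
    using assms(1,5) by (auto simp: family_F_def intro: continuous_on_subset mono_on_subset)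
  have "x0 < 1/2"
    using assms(5,6) \<open>g (1/2) = 1/2\<close> by (cases "x0 = 1/2") auto
  define v where "v = min (x0 - g x0) (bbar * (1 - 2 * x0) / (2 * fbar))"
  have "0 < v" "v \<le> x0 - g x0" "2 * fbar * v \<le> bbar * (1 - 2 * x0)"
    using assms(2,3,6) \<open>x0 < 1/2\<close> by (auto simp: v_def min_def field_simps)
  moreover have "continuous_on {0..x0} (\<lambda>x. x - g x)"
    using cont by (intro continuous_intros)
  ultimately obtain x where x: "0 \<le> x" "x \<le> x0" "x - g x = v"
    using IVT'[of "\<lambda>x. x - g x" 0 v x0] \<open>g 0 = 0\<close> assms(4) by auto
  have "0 \<le> g x"
    using mono_onD[OF mono, of 0 x] x \<open>g 0 = 0\<close> by simp
  have "2 * fbar * (x - g x) \<le> bbar * (1 - 2 * x0)"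
    using \<open>2 * fbar * v \<le> _\<close> x(3) by simp
  also have "\<dots> \<le> bbar * (1 - 2 * x)"
    using x(2) assms(3) by (intro mult_left_mono) auto
  finally show ?thesis
    using stationary_flows_from_gap[of fbar bbar g x] assms(2,3) \<open>0 \<le> g x\<close> x \<open>0 < v\<close> \<open>x0 < 1/2\<close> by simp
qed

lemma stationary_flows_from_excess:
  fixes g :: "real \<Rightarrow> real"
  assumes "fbar > 0" "bbar > 0" "c > 0" "4 * c * fbar * bbar \<le> 1"
    and "0 < u" "g u \<le> 1/2" and excess_u: "(1 - g u) * (g u - u) = c * bbar\<^sup>2 * u"
    and "0 < w" "g w \<le> 1/2" and excess_w: "(1 - g w) * (g w - w) = c * fbar\<^sup>2 * w"
  shows "\<exists>F B \<rho>. stationary_flows g fbar bbar F B \<rho> \<and> \<rho> 2 < \<rho> 1"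
proof -
  have above: "v < g v" if "0 < v" "g v \<le> 1/2" "(1 - g v) * (g v - v) = k * v" "k > 0" for v k
  proof -
    have "0 < (1 - g v) * (g v - v)"
      using that by simp
    then show ?thesis
      using that(2) by (simp add: zero_less_mult_iff)
  qed
  have "u < g u" "w < g w"
    using above[OF assms(5,6) excess_u] above[OF assms(8,9) excess_w] assms(1-3) by simp_all
  (* With this L the excess equations say that u and w are the pheromone fractions of path 2
     at s and at d. *)
  define L where "L = c * fbar * bbar / ((1 - g u) * (1 - g w))"
  have quarter: "1/4 \<le> (1 - g u) * (1 - g w)"
    using mult_mono[of "1/2" "1 - g u" "1/2" "1 - g w"] assms(6,9) by simp
  then have "(1 - g u) * (1 - g w) \<noteq> 0"
    by linarith
  then have L_eq: "L * ((1 - g u) * (1 - g w)) = c * fbar * bbar"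
    unfolding L_def by simp
  have L: "0 < L" "L \<le> 1"
    using quarter assms(1-4) by (simp_all add: L_def divide_le_eq)
  define P where "P = (1 - g u) * fbar + (1 - g w) * bbar * L"
  define P' where "P' = (1 - g u) * fbar * L + (1 - g w) * bbar"
  have pos: "P > 0" "P' > 0" "g u * fbar > 0" "g w * bbar > 0"
    using \<open>u < g u\<close> \<open>w < g w\<close> assms(1,2,5,6,8,9) L by (simp_all add: P_def P'_def add_pos_pos)
  have "(1 - g u) * (g u * fbar * (1 - u) - u * P) = 0"
    using excess_u L_eq unfolding P_def power2_eq_square by algebra
  then have "g u * fbar / (g u * fbar + P) = u"
    using pos assms(6) by (simp add: fraction_of_sum_eq_iff)
  then have forward: "split_share g (g u * fbar) P * fbar = g u * fbar"
      "split_share g P (g u * fbar) * fbar = (1 - g u) * fbar"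
    using split_share_minority[OF pos(3,1)] \<open>u < g u\<close> assms(6) by simp_all
  have "(1 - g w) * (g w * bbar * (1 - w) - w * P') = 0"
    using excess_w L_eq unfolding P'_def power2_eq_square by algebra
  then have "g w * bbar / (g w * bbar + P') = w"
    using pos assms(9) by (simp add: fraction_of_sum_eq_iff)
  then have backward: "split_share g (g w * bbar) P' * bbar = g w * bbar"
      "split_share g P' (g w * bbar) * bbar = (1 - g w) * bbar"
    using split_share_minority[OF pos(4,2)] \<open>w < g w\<close> assms(9) by simp_all
  have "stationary_flows g fbar bbar (\<lambda>i. if i = 1 then (1 - g u) * fbar else g u * fbar)
      (\<lambda>i. if i = 1 then (1 - g w) * bbar else g w * bbar) (\<lambda>i. if i = 1 then L else 0)"
    using forward backward pos L assms(1,2,6,9)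
    by (auto simp: stationary_flows_def P_def P'_def)
  then show ?thesis
    using L by fastforce
qed

lemma excess_level_set:
  fixes g :: "real \<Rightarrow> real"
  assumes "continuous_on {x0..1/2} g" "0 < x0" "x0 \<le> 1/2" "g (1/2) = 1/2"
    and "0 \<le> y" "y \<le> (1 - g x0) * (g x0 - x0) / x0"
  shows "\<exists>u. x0 \<le> u \<and> u \<le> 1/2 \<and> (1 - g u) * (g u - u) = y * u"
proof -
  have "continuous_on {x0..1/2} (\<lambda>u. (1 - g u) * (g u - u) / u)"
    using assms(1,2) by (intro continuous_intros) auto
  then obtain u where "x0 \<le> u" "u \<le> 1/2" "(1 - g u) * (g u - u) / u = y"
    using IVT2'[of "\<lambda>u. (1 - g u) * (g u - u) / u" "1/2" y x0] assms(3-6) by auto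
  then show ?thesis
    using assms(2) by (auto simp: field_simps)
qed

lemma stationary_flows_above_diagonal:
  assumes "g \<in> family_F" "fbar > 0" "bbar > 0" "0 \<le> x0" "x0 \<le> 1/2" "x0 < g x0"
  shows "\<exists>F B \<rho>. stationary_flows g fbar bbar F B \<rho> \<and> \<rho> 2 < \<rho> 1"
proof -
  have cont: "continuous_on {x0..1/2} g" and mono: "mono_on {x0..1/2} g" and "g 0 = 0" "g (1/2) = 1/2"
    using assms(1,4) by (auto simp: family_F_def intro: continuous_on_subset mono_on_subset)
  have "0 < x0"
    using assms(4,6) \<open>g 0 = 0\<close> by (cases "x0 = 0") auto
  have below_half: "g u \<le> 1/2" if "x0 \<le> u" "u \<le> 1/2" for u
    using mono_onD[OF mono, of u "1/2"] that assms(5) \<open>g (1/2) = 1/2\<close> by simp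
  define e where "e = (1 - g x0) * (g x0 - x0) / x0"
  have "e > 0"
    using below_half[of x0] assms(5,6) \<open>0 < x0\<close> by (simp add: e_def)
  define c where "c = min (min (e / bbar\<^sup>2) (e / fbar\<^sup>2)) (1 / (4 * fbar * bbar))"
  have "c > 0"
    using \<open>e > 0\<close> assms(2,3) by (simp add: c_def)
  have "c \<le> e / bbar\<^sup>2" "c \<le> e / fbar\<^sup>2" "c \<le> 1 / (4 * fbar * bbar)"
    by (simp_all add: c_def)
  then have "c * bbar\<^sup>2 \<le> e" "c * fbar\<^sup>2 \<le> e" "4 * c * fbar * bbar \<le> 1"
    using assms(2,3) by (simp_all add: pos_le_divide_eq mult_ac)
  then obtain u w where u: "x0 \<le> u" "u \<le> 1/2" "(1 - g u) * (g u - u) = c * bbar\<^sup>2 * u"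
    and w: "x0 \<le> w" "w \<le> 1/2" "(1 - g w) * (g w - w) = c * fbar\<^sup>2 * w"
    using excess_level_set[OF cont \<open>0 < x0\<close> assms(5) \<open>g (1/2) = 1/2\<close>, unfolded e_def[symmetric]]
    using \<open>c > 0\<close> by (meson less_imp_le mult_pos_pos zero_less_power assms(2,3))
  show ?thesis
    using stationary_flows_from_excess[OF assms(2,3) \<open>c > 0\<close> \<open>4 * c * fbar * bbar \<le> 1\<close> _ _ u(3) _ _ w(3)]
      below_half u w \<open>0 < x0\<close> by simp
qed

theorem proposition2:
  fixes n :: "nat \<Rightarrow> nat" and \<delta> fbar bbar :: real and g :: "real \<Rightarrow> real"
  assumes "n 1 \<ge> 1" and "n 2 \<ge> 1"
    and "0 < \<delta>" and "\<delta> < 1"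
    and "fbar > 0" and "bbar > 0"
    and "g \<in> family_F"
    and "\<exists>x\<in>{0..1/2}. g x \<noteq> x"
  shows "\<exists>l :: nat \<Rightarrow> nat \<Rightarrow> real.
           (\<forall>i\<in>{1,2}. \<forall>k\<in>{1..n i}. 0 \<le> l i k \<and> l i k \<le> 1)
         \<and> path_leak l n 1 < path_leak l n 2
         \<and> (\<exists>p0 f0 b0.
              (\<forall>i\<in>{1,2}. \<forall>k\<in>{0..n i}. 0 < p0 i k)
            \<and> (\<forall>i\<in>{1,2}. \<forall>k\<in>{1..n i}. 0 \<le> f0 i k \<and> 0 \<le> b0 i k)
            \<and> \<not> ((\<lambda>t. nu_f_ss1 (traj g \<delta> fbar bbar n l (p0, f0, b0) t)) \<longlonglongrightarrow> 1))"
proof -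
  obtain x0 where x0: "0 \<le> x0" "x0 \<le> 1/2" "g x0 \<noteq> x0"
    using assms(8) by auto
  then consider "g x0 < x0" | "x0 < g x0"
    by linarith
  then obtain F B \<rho> where "stationary_flows g fbar bbar F B \<rho>" "\<rho> 2 < \<rho> 1"
    using stationary_flows_below_diagonal[OF assms(7,5,6) x0(1,2)]
      stationary_flows_above_diagonal[OF assms(7,5,6) x0(1,2)] by metis
  then show ?thesis
    by (rule nonconvergent_from_stationary_flows[OF assms(1-4)])
qed

end
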